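(* Let $\Sigma\cong\mathbb R^{10}$ have coordinates $(a_1,a_2,a_3,a_4,\alpha_1,\alpha_2,\alpha_3,\beta_1,\beta_2,\gamma)$, and consider the vector fields $$\mathbf V_1=-\alpha_1\partial_{a_2}-\alpha_2\partial_{a_3}+3\alpha_3\partial_{a_4}-2\beta_1\partial_{\alpha_2}+2\beta_2\partial_{\alpha_3}-\gamma\partial_{\beta_2},$$ $$\mathbf V_2=3\alpha_1\partial_{a_1}+\alpha_2\partial_{a_2}-\alpha_3\partial_{a_3}+2\beta_1\partial_{\alpha_1}+2\beta_2\partial_{\alpha_2}+\gamma\partial_{\beta_1},$$ $$\mathbf V_3=3a_2\partial_{a_1}+(2a_3-a_1)\partial_{a_2}+(a_4-2a_2)\partial_{a_3}-3a_3\partial_{a_4}+\alpha_2\partial_{\alpha_1}-2(\alpha_1+\alpha_3)\partial_{\alpha_2}+\alpha_2\partial_{\alpha_3}+\beta_2\partial_{\beta_1}-\beta_1\partial_{\beta_2},$$ $$\mathbf T_1=3\partial_{a_1}+\partial_{a_3},\qquad \mathbf T_2=\partial_{a_2}+3\partial_{a_4},\qquad \mathbf T_3=\partial_{\alpha_1}-\partial_{\alpha_3}.$$ Define the polynomials $\tilde I_1=\gamma\alpha_2-2\beta_1\beta_2$, $\tilde I_2=\gamma(\alpha_1+\alpha_3)+\beta_2^2-\beta_1^2$, $\tilde I_3=\gamma^2(a_1-3a_3)+3\gamma(\beta_2\alpha_2-\beta_1(\alpha_1+\alpha_3))+2\beta_1(\beta_1^2-3\beta_2^2)$, $\tilde I_4=\gamma^2(3a_2-a_4)-3\gamma(\beta_1\alpha_2+\beta_2(\alpha_1+\alpha_3))+2\beta_2(3\beta_1^2-\beta_2^2)$,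 and $I_1=2(\tilde I_1^2-3\tilde I_2^2)\tilde I_1\tilde I_3\tilde I_4+(3\tilde I_1^2-\tilde I_2^2)\tilde I_2(\tilde I_3^2-\tilde I_4^2)$, $I_2=\tilde I_1^2+\tilde I_2^2$, $I_3=\tilde I_3^2+\tilde I_4^2$, $I_4=\gamma$. Then $\tilde I_1,\dots,\tilde I_4,\gamma$ are annihilated by $\mathbf T_1,\mathbf T_2,\mathbf T_3,\mathbf V_1,\mathbf V_2$, and $I_1,I_2,I_3,I_4$ are homogeneous polynomials on $\Sigma$ annihilated by all six vector fields $\mathbf V_1,\mathbf V_2,\mathbf V_3,\mathbf T_1,\mathbf T_2,\mathbf T_3$.
   Context: Interpretation: points of $\Sigma$ parametrize Killing tensors $\mathbf L$ of valence three of the Euclidean plane via the Cartesian components $L^{111}=a_1+3\alpha_1y+3\beta_1y^2+\gamma y^3$, $L^{112}=a_2+\alpha_2y-\alpha_1x-2\beta_1xy+\beta_2y^2-\gamma xy^2$, $L^{122}=a_3-\alpha_2x-\alpha_3y-2\beta_2xy+\beta_1x^2+\gamma yx^2$, $L^{222}=a_4+3\alpha_3x+3\beta_2x^2-\gamma x^3$. $\mathbf V_1,\mathbf V_2,\mathbf V_3$ are the infinitesimal generators of the action induced on $\Sigma$ by the Euclidean isometry group (translations in $x$, $y$ and rotation), and $\mathbf T_1,\mathbf T_2,\mathbf T_3$ span the tangent directions of the subspace of trivial Killing tensors $\mathbf g\odot\mathbf X$ ($\mathbf X$ a Killing vector). Functions annihilated by all six fields are the isometry-group invariants of non-trivial valence-three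 Killing tensors. *)

theory Defs
  imports "HOL-Analysis.Analysis"
begin

type_synonym pt = "real^10"

definition ca1 :: "pt \<Rightarrow> real" where "ca1 p = p $ 0"
definition ca2 :: "pt \<Rightarrow> real" where "ca2 p = p $ 1"
definition ca3 :: "pt \<Rightarrow> real" where "ca3 p = p $ 2"
definition ca4 :: "pt \<Rightarrow> real" where "ca4 p = p $ 3"
definition cal1 :: "pt \<Rightarrow> real" where "cal1 p = p $ 4"
definition cal2 :: "pt \<Rightarrow> real" where "cal2 p = p $ 5"
definition cal3 :: "pt \<Rightarrow> real" where "cal3 p = p $ 6"
definition cb1 :: "pt \<Rightarrow> real" where "cb1 p = p $ 7"
definition cb2 :: "pt \<Rightarrow> real" where "cb2 p = p $ 8"
definition cg :: "pt \<Rightarrow> real" where "cg p = p $ 9"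

definition d_a1 :: pt where "d_a1 = axis 0 1"
definition d_a2 :: pt where "d_a2 = axis 1 1"
definition d_a3 :: pt where "d_a3 = axis 2 1"
definition d_a4 :: pt where "d_a4 = axis 3 1"
definition d_al1 :: pt where "d_al1 = axis 4 1"
definition d_al2 :: pt where "d_al2 = axis 5 1"
definition d_al3 :: pt where "d_al3 = axis 6 1"
definition d_b1 :: pt where "d_b1 = axis 7 1"
definition d_b2 :: pt where "d_b2 = axis 8 1"
definition d_g :: pt where "d_g = axis 9 1"

definition V1 :: "pt \<Rightarrow> pt" where
  "V1 p = (- cal1 p) *\<^sub>R d_a2 + (- cal2 p) *\<^sub>R d_a3 + (3 * cal3 p) *\<^sub>R d_a4
        + (-2 * cb1 p) *\<^sub>R d_al2 + (2 * cb2 p) *\<^sub>R d_al3 + (- cg p) *\<^sub>R d_b2"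

definition V2 :: "pt \<Rightarrow> pt" where
  "V2 p = (3 * cal1 p) *\<^sub>R d_a1 + cal2 p *\<^sub>R d_a2 + (- cal3 p) *\<^sub>R d_a3
        + (2 * cb1 p) *\<^sub>R d_al1 + (2 * cb2 p) *\<^sub>R d_al2 + cg p *\<^sub>R d_b1"

definition V3 :: "pt \<Rightarrow> pt" where
  "V3 p = (3 * ca2 p) *\<^sub>R d_a1 + (2 * ca3 p - ca1 p) *\<^sub>R d_a2
        + (ca4 p - 2 * ca2 p) *\<^sub>R d_a3 + (-3 * ca3 p) *\<^sub>R d_a4
        + cal2 p *\<^sub>R d_al1 + (-2 * (cal1 p + cal3 p)) *\<^sub>R d_al2 + cal2 p *\<^sub>R d_al3
        + cb2 p *\<^sub>R d_b1 + (- cb1 p) *\<^sub>R d_b2"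

definition T1 :: "pt \<Rightarrow> pt" where "T1 p = 3 *\<^sub>R d_a1 + d_a3"
definition T2 :: "pt \<Rightarrow> pt" where "T2 p = d_a2 + 3 *\<^sub>R d_a4"
definition T3 :: "pt \<Rightarrow> pt" where "T3 p = d_al1 - d_al3"

definition annihilates :: "(pt \<Rightarrow> pt) \<Rightarrow> (pt \<Rightarrow> real) \<Rightarrow> bool" where
  "annihilates X f \<longleftrightarrow> (\<forall>p. \<exists>D. (f has_derivative D) (at p) \<and> D (X p) = 0)"

inductive poly_fun :: "(pt \<Rightarrow> real) \<Rightarrow> bool" where
  const: "poly_fun (\<lambda>p. c)"
| coord: "poly_fun (\<lambda>p. p $ i)"
| add: "poly_fun f \<Longrightarrow> poly_fun g \<Longrightarrow> poly_fun (\<lambda>p. f p + g p)"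
| mult: "poly_fun f \<Longrightarrow> poly_fun g \<Longrightarrow> poly_fun (\<lambda>p. f p * g p)"

definition homogeneous :: "(pt \<Rightarrow> real) \<Rightarrow> bool" where
  "homogeneous f \<longleftrightarrow> (\<exists>d::nat. \<forall>t p. f (t *\<^sub>R p) = t ^ d * f p)"

definition It1 :: "pt \<Rightarrow> real" where
  "It1 p = cg p * cal2 p - 2 * cb1 p * cb2 p"
definition It2 :: "pt \<Rightarrow> real" where
  "It2 p = cg p * (cal1 p + cal3 p) + (cb2 p)^2 - (cb1 p)^2"
definition It3 :: "pt \<Rightarrow> real" where
  "It3 p = (cg p)^2 * (ca1 p - 3 * ca3 p)
          + 3 * cg p * (cb2 p * cal2 p - cb1 p * (cal1 p + cal3 p))
          + 2 * cb1 p * ((cb1 p)^2 - 3 * (cb2 p)^2)"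
definition It4 :: "pt \<Rightarrow> real" where
  "It4 p = (cg p)^2 * (3 * ca2 p - ca4 p)
          - 3 * cg p * (cb1 p * cal2 p + cb2 p * (cal1 p + cal3 p))
          + 2 * cb2 p * (3 * (cb1 p)^2 - (cb2 p)^2)"

definition I1 :: "pt \<Rightarrow> real" where
  "I1 p = 2 * ((It1 p)^2 - 3 * (It2 p)^2) * It1 p * It3 p * It4 p
        + (3 * (It1 p)^2 - (It2 p)^2) * It2 p * ((It3 p)^2 - (It4 p)^2)"
definition I2 :: "pt \<Rightarrow> real" where "I2 p = (It1 p)^2 + (It2 p)^2"
definition I3 :: "pt \<Rightarrow> real" where "I3 p = (It3 p)^2 + (It4 p)^2"
definition I4 :: "pt \<Rightarrow> real" where "I4 p = cg p"

end

theory Submission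
  imports Defs
begin

text \<open>Put \<open>z = It1 + i It2\<close> and \<open>w = It3 + i It4\<close>. The fields T1, T2, T3, V1, V2 kill
  It1, ..., It4 and \<open>\<gamma>\<close>, while the rotation V3 kills \<open>\<gamma>\<close> and acts on \<open>z\<close> and \<open>w\<close> as
  multiplication by \<open>2 i\<close> and \<open>-3 i\<close>. So each of the six fields is a derivation having
  \<open>z\<close> and \<open>w\<close> as eigenfunctions with purely imaginary eigenvalues \<open>c\<close>, \<open>d\<close> satisfying
  \<open>3 c + 2 d = 0\<close>. Hence it kills the weight-zero expressions
  \<open>I2 = z conj z\<close>, \<open>I3 = w conj w\<close> and \<open>I1 = Im (z\<^sup>3 w\<^sup>2)\<close>, and of course \<open>I4 = \<gamma>\<close>.\<close>

definition lie_deriv ::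
  "('a::real_normed_vector \<Rightarrow> 'a) \<Rightarrow> ('a \<Rightarrow> 'b::real_normed_vector) \<Rightarrow> ('a \<Rightarrow> 'b) \<Rightarrow> bool" where
  "lie_deriv X f g \<longleftrightarrow> (\<forall>p. \<exists>D. (f has_derivative D) (at p) \<and> D (X p) = g p)"

lemma annihilates_iff_lie_deriv: "annihilates X f \<longleftrightarrow> lie_deriv X f (\<lambda>_. 0)"
  unfolding annihilates_def lie_deriv_def ..

lemma lie_derivI:
  assumes "\<And>p. (f has_derivative D p) (at p)" and "\<And>p. D p (X p) = g p"
  shows "lie_deriv X f g"
  using assms unfolding lie_deriv_def by blast

lemma lie_derivE:
  assumes "lie_deriv X f g"
  obtains D where "(f has_derivative D) (at p)" and "D (X p) = g p"
  using assms unfolding lie_deriv_def by blast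

lemma lie_deriv_cong:
  assumes "lie_deriv X f g" and "\<And>p. g p = h p"
  shows "lie_deriv X f h"
  using assms unfolding lie_deriv_def by simp

lemma lie_deriv_const: "lie_deriv X (\<lambda>_. c) (\<lambda>_. 0)"
  by (rule lie_derivI[OF has_derivative_const]) simp

lemma lie_deriv_bounded_linear:
  assumes L: "bounded_linear L" and f: "lie_deriv X f g"
  shows "lie_deriv X (\<lambda>p. L (f p)) (\<lambda>p. L (g p))"
  unfolding lie_deriv_def
proof
  fix p
  obtain D where "(f has_derivative D) (at p)" and "D (X p) = g p"
    using f by (rule lie_derivE)
  then show "\<exists>D. ((\<lambda>p. L (f p)) has_derivative D) (at p) \<and> D (X p) = L (g p)"
    by (intro exI[of _ "\<lambda>h. L (D h)"] conjI bounded_linear.has_derivative[OF L]) simp_all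
qed

lemma lie_deriv_add:
  assumes f: "lie_deriv X f f'" and g: "lie_deriv X g g'"
  shows "lie_deriv X (\<lambda>p. f p + g p) (\<lambda>p. f' p + g' p)"
  unfolding lie_deriv_def
proof
  fix p
  obtain D where "(f has_derivative D) (at p)" and "D (X p) = f' p"
    using f by (rule lie_derivE)
  moreover obtain E where "(g has_derivative E) (at p)" and "E (X p) = g' p"
    using g by (rule lie_derivE)
  ultimately show "\<exists>D. ((\<lambda>p. f p + g p) has_derivative D) (at p) \<and> D (X p) = f' p + g' p"
    by (intro exI[of _ "\<lambda>h. D h + E h"] conjI has_derivative_add) simp_all
qed

lemma lie_deriv_mult:
  fixes f g :: "'a::real_normed_vector \<Rightarrow> 'b::real_normed_algebra"
  assumes f: "lie_deriv X f f'" and g: "lie_deriv X g g'"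
  shows "lie_deriv X (\<lambda>p. f p * g p) (\<lambda>p. f p * g' p + f' p * g p)"
  unfolding lie_deriv_def
proof
  fix p
  obtain D where "(f has_derivative D) (at p)" and "D (X p) = f' p"
    using f by (rule lie_derivE)
  moreover obtain E where "(g has_derivative E) (at p)" and "E (X p) = g' p"
    using g by (rule lie_derivE)
  ultimately show "\<exists>D. ((\<lambda>p. f p * g p) has_derivative D) (at p) \<and> D (X p) = f p * g' p + f' p * g p"
    by (intro exI[of _ "\<lambda>h. f p * E h + D h * g p"] conjI has_derivative_mult) simp_all
qed

lemma lie_deriv_Complex:
  assumes "lie_deriv X f f'" and "lie_deriv X g g'"
  shows "lie_deriv X (\<lambda>p. Complex (f p) (g p)) (\<lambda>p. Complex (f' p) (g' p))"
proof -
  have "lie_deriv X (\<lambda>p. of_real (f p) + \<i> * of_real (g p))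
          (\<lambda>p. of_real (f' p) + (\<i> * of_real (g' p) + 0 * of_real (g p)))"
    by (intro lie_deriv_add lie_deriv_mult lie_deriv_const
        lie_deriv_bounded_linear[OF bounded_linear_of_real] assms)
  then show ?thesis
    by (simp add: Complex_eq)
qed

lemma lie_deriv_eigen_mult:
  fixes f g :: "'a::real_normed_vector \<Rightarrow> 'b::real_normed_field"
  assumes "lie_deriv X f (\<lambda>p. c * f p)" and "lie_deriv X g (\<lambda>p. d * g p)"
  shows "lie_deriv X (\<lambda>p. f p * g p) (\<lambda>p. (c + d) * (f p * g p))"
  by (rule lie_deriv_cong[OF lie_deriv_mult[OF assms]]) (simp add: algebra_simps)

lemma lie_deriv_eigen_power:
  fixes f :: "'a::real_normed_vector \<Rightarrow> 'b::real_normed_field"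
  assumes "lie_deriv X f (\<lambda>p. c * f p)"
  shows "lie_deriv X (\<lambda>p. f p ^ n) (\<lambda>p. (of_nat n * c) * f p ^ n)"
proof (induction n)
  case 0
  show ?case
    using lie_deriv_const[of X 1] by simp
next
  case (Suc n)
  show ?case
    using lie_deriv_eigen_mult[OF assms Suc.IH] by (simp add: algebra_simps)
qed

lemma lie_deriv_eigen_cnj:
  assumes "lie_deriv X f (\<lambda>p. c * f p)"
  shows "lie_deriv X (\<lambda>p. cnj (f p)) (\<lambda>p. cnj c * cnj (f p))"
  using lie_deriv_bounded_linear[OF bounded_linear_cnj assms] by simp

lemma has_derivative_vec_nth: "((\<lambda>p. p $ i) has_derivative (\<lambda>h. h $ i)) (at p)"
  by (rule bounded_linear_imp_has_derivative) (rule bounded_linear_vec_nth)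

lemmas coordinate_defs = ca1_def ca2_def ca3_def ca4_def cal1_def cal2_def cal3_def cb1_def cb2_def cg_def
lemmas field_defs = V1_def V2_def V3_def T1_def T2_def T3_def
  d_a1_def d_a2_def d_a3_def d_a4_def d_al1_def d_al2_def d_al3_def d_b1_def d_b2_def

lemma lie_deriv_It_zero:
  assumes "X \<in> {T1, T2, T3, V1, V2}"
  shows "lie_deriv X It1 (\<lambda>_. 0)" "lie_deriv X It2 (\<lambda>_. 0)"
    "lie_deriv X It3 (\<lambda>_. 0)" "lie_deriv X It4 (\<lambda>_. 0)"
  unfolding It1_def It2_def It3_def It4_def coordinate_defs
  by (rule lie_derivI, (rule derivative_eq_intros has_derivative_vec_nth refl)+,
      use assms in \<open>auto simp: field_defs coordinate_defs axis_def algebra_simps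
        power2_eq_square\<close>)+

lemma lie_deriv_V3_It:
  "lie_deriv V3 It1 (\<lambda>p. - 2 * It2 p)" "lie_deriv V3 It2 (\<lambda>p. 2 * It1 p)"
  "lie_deriv V3 It3 (\<lambda>p. 3 * It4 p)" "lie_deriv V3 It4 (\<lambda>p. - 3 * It3 p)"
  unfolding It1_def It2_def It3_def It4_def coordinate_defs
  by (rule lie_derivI, (rule derivative_eq_intros has_derivative_vec_nth refl)+,
      simp add: field_defs coordinate_defs axis_def algebra_simps power2_eq_square)+

lemma lie_deriv_cg: "X \<in> {V1, V2, V3, T1, T2, T3} \<Longrightarrow> lie_deriv X cg (\<lambda>_. 0)"
  unfolding cg_def
  by (rule lie_derivI[OF has_derivative_vec_nth]) (auto simp: field_defs axis_def)

definition It12 :: "pt \<Rightarrow> complex" where "It12 p = Complex (It1 p) (It2 p)"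
definition It34 :: "pt \<Rightarrow> complex" where "It34 p = Complex (It3 p) (It4 p)"

lemma lie_deriv_It12_It34_eigen:
  assumes "X \<in> {V1, V2, V3, T1, T2, T3}"
  obtains c d where "lie_deriv X It12 (\<lambda>p. c * It12 p)" "lie_deriv X It34 (\<lambda>p. d * It34 p)"
    and "Re c = 0" and "Re d = 0" and "3 * c + 2 * d = 0"
proof (cases "X = V3")
  case True
  show ?thesis
  proof (rule that)
    show "lie_deriv X It12 (\<lambda>p. (2 * \<i>) * It12 p)"
      unfolding True It12_def
      by (rule lie_deriv_cong[OF lie_deriv_Complex[OF lie_deriv_V3_It(1,2)]])
        (simp add: complex_eq_iff)
    show "lie_deriv X It34 (\<lambda>p. (- 3 * \<i>) * It34 p)"
      unfolding True It34_def
      by (rule lie_deriv_cong[OF lie_deriv_Complex[OF lie_deriv_V3_It(3,4)]])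
        (simp add: complex_eq_iff)
  qed simp_all
next
  case False
  then have X: "X \<in> {T1, T2, T3, V1, V2}"
    using assms by auto
  show ?thesis
  proof (rule that)
    show "lie_deriv X It12 (\<lambda>p. 0 * It12 p)"
      unfolding It12_def
      by (rule lie_deriv_cong[OF lie_deriv_Complex[OF lie_deriv_It_zero(1,2)[OF X]]])
        (simp add: complex_eq_iff)
    show "lie_deriv X It34 (\<lambda>p. 0 * It34 p)"
      unfolding It34_def
      by (rule lie_deriv_cong[OF lie_deriv_Complex[OF lie_deriv_It_zero(3,4)[OF X]]])
        (simp add: complex_eq_iff)
  qed simp_all
qed

lemma I1_eq_Im: "I1 = (\<lambda>p. Im (It12 p ^ 3 * It34 p ^ 2))"
  unfolding I1_def[abs_def] It12_def It34_def
  by (simp add: power2_eq_square power3_eq_cube algebra_simps)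

lemma I2_eq_Re: "I2 = (\<lambda>p. Re (It12 p * cnj (It12 p)))"
  unfolding I2_def[abs_def] It12_def by (simp add: power2_eq_square)

lemma I3_eq_Re: "I3 = (\<lambda>p. Re (It34 p * cnj (It34 p)))"
  unfolding I3_def[abs_def] It34_def by (simp add: power2_eq_square)

lemma lie_deriv_Re_mult_cnj:
  assumes "lie_deriv X f (\<lambda>p. c * f p)" and "Re c = 0"
  shows "lie_deriv X (\<lambda>p. Re (f p * cnj (f p))) (\<lambda>_. 0)"
proof -
  have "lie_deriv X (\<lambda>p. f p * cnj (f p)) (\<lambda>p. (c + cnj c) * (f p * cnj (f p)))"
    by (intro lie_deriv_eigen_mult lie_deriv_eigen_cnj assms(1))
  moreover have "c + cnj c = 0"
    using assms(2) by (simp add: complex_eq_iff)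
  ultimately show ?thesis
    using lie_deriv_bounded_linear[OF bounded_linear_Re] by fastforce
qed

lemma annihilates_I1:
  assumes "X \<in> {V1, V2, V3, T1, T2, T3}"
  shows "annihilates X I1"
proof -
  obtain c d where z: "lie_deriv X It12 (\<lambda>p. c * It12 p)"
    and w: "lie_deriv X It34 (\<lambda>p. d * It34 p)" and weight: "3 * c + 2 * d = 0"
    using assms by (rule lie_deriv_It12_It34_eigen)
  have "lie_deriv X (\<lambda>p. It12 p ^ 3 * It34 p ^ 2)
      (\<lambda>p. (of_nat 3 * c + of_nat 2 * d) * (It12 p ^ 3 * It34 p ^ 2))"
    by (intro lie_deriv_eigen_mult lie_deriv_eigen_power z w)
  then have "lie_deriv X (\<lambda>p. It12 p ^ 3 * It34 p ^ 2) (\<lambda>_. 0)"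
    using weight by simp
  from lie_deriv_bounded_linear[OF bounded_linear_Im this] show ?thesis
    by (simp add: annihilates_iff_lie_deriv I1_eq_Im)
qed

lemma annihilates_I2:
  assumes "X \<in> {V1, V2, V3, T1, T2, T3}"
  shows "annihilates X I2"
proof -
  obtain c where "lie_deriv X It12 (\<lambda>p. c * It12 p)" and "Re c = 0"
    using lie_deriv_It12_It34_eigen[OF assms] by metis
  then show ?thesis
    unfolding annihilates_iff_lie_deriv I2_eq_Re by (rule lie_deriv_Re_mult_cnj)
qed

lemma annihilates_I3:
  assumes "X \<in> {V1, V2, V3, T1, T2, T3}"
  shows "annihilates X I3"
proof -
  obtain d where "lie_deriv X It34 (\<lambda>p. d * It34 p)" and "Re d = 0"
    using lie_deriv_It12_It34_eigen[OF assms] by metis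
  then show ?thesis
    unfolding annihilates_iff_lie_deriv I3_eq_Re by (rule lie_deriv_Re_mult_cnj)
qed

lemma It_scaleR:
  "It1 (t *\<^sub>R p) = t ^ 2 * It1 p" "It2 (t *\<^sub>R p) = t ^ 2 * It2 p"
  "It3 (t *\<^sub>R p) = t ^ 3 * It3 p" "It4 (t *\<^sub>R p) = t ^ 3 * It4 p"
  "cg (t *\<^sub>R p) = t * cg p"
  unfolding It1_def It2_def It3_def It4_def coordinate_defs
  by (simp_all add: algebra_simps power2_eq_square power3_eq_cube)

lemma homogeneous_I1: "homogeneous I1"
  unfolding homogeneous_def I1_def It_scaleR by (intro exI[of _ 12] allI) algebra

lemma homogeneous_I2: "homogeneous I2"
  unfolding homogeneous_def I2_def It_scaleR by (intro exI[of _ 4] allI) algebra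

lemma homogeneous_I3: "homogeneous I3"
  unfolding homogeneous_def I3_def It_scaleR by (intro exI[of _ 6] allI) algebra

lemma homogeneous_I4: "homogeneous I4"
  unfolding homogeneous_def I4_def It_scaleR by (intro exI[of _ 1] allI) simp

lemma poly_fun_diff: "poly_fun f \<Longrightarrow> poly_fun g \<Longrightarrow> poly_fun (\<lambda>p. f p - g p)"
  using poly_fun.add[OF _ poly_fun.mult[OF poly_fun.const[of "-1"]], of f g] by simp

lemma poly_fun_power: "poly_fun f \<Longrightarrow> poly_fun (\<lambda>p. f p ^ n)"
  by (induction n) (auto intro: poly_fun.intros)

lemma poly_fun_It: "poly_fun It1" "poly_fun It2" "poly_fun It3" "poly_fun It4" "poly_fun cg"
  unfolding It1_def[abs_def] It2_def[abs_def] It3_def[abs_def] It4_def[abs_def] coordinate_defs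
  by (intro poly_fun.intros poly_fun_diff poly_fun_power)+

lemma poly_fun_I: "poly_fun I1" "poly_fun I2" "poly_fun I3" "poly_fun I4"
  unfolding I1_def[abs_def] I2_def[abs_def] I3_def[abs_def] I4_def[abs_def]
  by (intro poly_fun.intros poly_fun_diff poly_fun_power poly_fun_It)+

theorem mainTheorem4:
  shows "(\<forall>f \<in> {It1, It2, It3, It4, cg}. \<forall>X \<in> {T1, T2, T3, V1, V2}. annihilates X f)
       \<and> (\<forall>f \<in> {I1, I2, I3, I4}. poly_fun f \<and> homogeneous f
             \<and> (\<forall>X \<in> {V1, V2, V3, T1, T2, T3}. annihilates X f))"
proof -
  have "annihilates X f" if "f \<in> {It1, It2, It3, It4, cg}" and "X \<in> {T1, T2, T3, V1, V2}" for f X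
    using that lie_deriv_It_zero[of X] lie_deriv_cg[of X] by (auto simp: annihilates_iff_lie_deriv)
  moreover have "annihilates X f" if "f \<in> {I1, I2, I3, I4}" and "X \<in> {V1, V2, V3, T1, T2, T3}" for f X
    using that annihilates_I1 annihilates_I2 annihilates_I3 lie_deriv_cg[of X]
    by (auto simp: annihilates_iff_lie_deriv I4_def[abs_def])
  ultimately show ?thesis
    using poly_fun_I homogeneous_I1 homogeneous_I2 homogeneous_I3 homogeneous_I4 by blast
qed

end
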